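(* Let $a_1\ge\cdots\ge a_n$ and $b_1\ge\cdots\ge b_n$ be real numbers such that for every $1\le i<n$, either $\min(a_i,b_i)\ge\max(a_{i+1},b_{i+1})$ or $\{a_i,b_i\}=\{a_{i+1},b_{i+1}\}$; suppose further that $\sum_{i=1}^n a_i=\sum_{i=1}^n b_i$, $\sum_{i=1}^n a_i^2=\sum_{i=1}^n b_i^2$, and \[ \sum_{i=1}^j(a_i-a_j)(a_i-b_j)\ge\sum_{i=1}^j(b_i-a_j)(b_i-b_j)\quad\text{for all }1\le j\le n. \] Then $\sum_{i=1}^n f(a_i)\ge\sum_{i=1}^n f(b_i)$ for every three times differentiable $f:I\to\mathbb{R}$ with $f'''\ge 0$, where $I$ is any interval containing all the $a_i$ and $b_i$. *)

theory Defs
  imports "HOL-Analysis.Analysis"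
begin

end

theory Submission
  imports Defs
begin

text \<open>
  Write D(a,b) for the divided difference of f (f'(a) on the diagonal) and, for the
  convex function f', write D'(a,b) for its divided difference and L_ab for its secant
  line through a and b.  Since f' lies below L_ab between a and b and above it outside,
  comparing f' with the affine function L_ab on an interval gives
    D(a,b) <= L_ab((a+b)/2)   and   L_ab((a'+b')/2) <= D(a',b')
  whenever [a',b'] is disjoint from (a,b).  For consecutive pairs (a',b') below (a,b)
  this yields D(a,b) - D(a',b') = psi * (c - c') with psi between D'(a',b') and
  D'(a,b), where c, c' are the midpoints.  An Abel summation of
  sum (f(a_i) - f(b_i)) = sum (a_i - b_i) D(a_i,b_i), whose partial "moments"
  sum_{i<=j} (a_i - b_i)(c_i - c_j) are nonnegative by hypothesis and vanish at j = n
  by the two moment conditions, then proves the theorem.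
\<close>

definition divdiff :: "(real \<Rightarrow> real) \<Rightarrow> (real \<Rightarrow> real) \<Rightarrow> real \<Rightarrow> real \<Rightarrow> real" where
  "divdiff g g' x y = (if x = y then g' x else (g x - g y) / (x - y))"

lemma divdiff_commute: "divdiff g g' x y = divdiff g g' y x"
  unfolding divdiff_def by (metis minus_diff_eq minus_divide_divide)

lemma divdiff_mult: "(x - y) * divdiff g g' x y = g x - g y"
  unfolding divdiff_def by simp

lemma interval_between:
  "is_interval (I :: real set) \<Longrightarrow> x \<in> I \<Longrightarrow> y \<in> I \<Longrightarrow> x \<le> z \<Longrightarrow> z \<le> y \<Longrightarrow> z \<in> I"
  unfolding is_interval_1 by blast

lemma mvt_on_interval:
  fixes F F' :: "real \<Rightarrow> real"
  assumes I: "is_interval I" and "x \<in> I" "y \<in> I" "x < y"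
    and deriv: "\<And>z. z \<in> I \<Longrightarrow> (F has_real_derivative F' z) (at z within I)"
  shows "\<exists>z. x < z \<and> z < y \<and> F y - F x = (y - x) * F' z"
proof -
  have sub: "{x..y} \<subseteq> I"
    using interval_between[OF I \<open>x \<in> I\<close> \<open>y \<in> I\<close>] by auto
  have "(F has_derivative (*) (F' z)) (at z within {x..y})" if "x \<le> z" "z \<le> y" for z
    using has_field_derivative_subset[OF deriv sub] sub that
    unfolding has_field_derivative_def by auto
  then obtain z where "z \<in> {x<..<y}" "F y - F x = F' z * (y - x)"
    using mvt_simple[OF \<open>x < y\<close>, of F "\<lambda>z. (*) (F' z)"] by blast
  then show ?thesis by (auto simp: mult.commute)
qed

lemma mono_if_deriv_nonneg:
  fixes g g' :: "real \<Rightarrow> real"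
  assumes I: "is_interval I"
    and deriv: "\<And>z. z \<in> I \<Longrightarrow> (g has_real_derivative g' z) (at z within I)"
    and nonneg: "\<And>z. z \<in> I \<Longrightarrow> 0 \<le> g' z"
    and "x \<in> I" "y \<in> I" "x \<le> y"
  shows "g x \<le> g y"
proof (cases "x = y")
  case False
  then obtain z where z: "x < z" "z < y" "g y - g x = (y - x) * g' z"
    using mvt_on_interval[OF I \<open>x \<in> I\<close> \<open>y \<in> I\<close> _ deriv] \<open>x \<le> y\<close> by force
  have "0 \<le> g' z"
    using nonneg interval_between[OF I \<open>x \<in> I\<close> \<open>y \<in> I\<close>] z by auto
  then have "0 \<le> (y - x) * g' z" using z by simp
  with z show ?thesis by linarith
qed simp

text \<open>This is the ordinary mean value theorem for F minus a quadratic antiderivative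
  of l, whose divided difference is l at the midpoint.\<close>
lemma affine_mean_value:
  fixes F F' :: "real \<Rightarrow> real"
  assumes I: "is_interval I"
    and deriv: "\<And>z. z \<in> I \<Longrightarrow> (F has_real_derivative F' z) (at z within I)"
    and "u \<in> I" "v \<in> I"
  shows "\<exists>\<xi>. min u v \<le> \<xi> \<and> \<xi> \<le> max u v \<and>
           divdiff F F' u v - (p + q * ((u + v) / 2 - c)) = F' \<xi> - (p + q * (\<xi> - c))"
proof -
  have strict: "\<exists>\<xi>. u < \<xi> \<and> \<xi> < v \<and>
           divdiff F F' u v - (p + q * ((u + v) / 2 - c)) = F' \<xi> - (p + q * (\<xi> - c))"
    if uv: "u \<in> I" "v \<in> I" "u < v" for u v
  proof -
    define H where "H z = F z - (p * (z - c) + q * (z - c)\<^sup>2 / 2)" for z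
    have H_deriv: "(H has_real_derivative F' z - (p + q * (z - c))) (at z within I)" if "z \<in> I" for z
      using deriv[OF that] unfolding H_def by (auto intro!: derivative_eq_intros simp: field_simps)
    obtain \<xi> where \<xi>: "u < \<xi>" "\<xi> < v" "H v - H u = (v - u) * (F' \<xi> - (p + q * (\<xi> - c)))"
      using mvt_on_interval[OF I uv H_deriv] by blast
    have "F v - F u = (v - u) * divdiff F F' u v"
      using divdiff_mult[of v u F F'] divdiff_commute[of F F' u v] by simp
    then have "H v - H u = (v - u) * (divdiff F F' u v - (p + q * ((u + v) / 2 - c)))"
      unfolding H_def by (simp add: field_simps power2_eq_square)
    with \<xi> \<open>u < v\<close> show ?thesis by auto
  qed
  consider "u < v" | "u = v" | "v < u" by linarith
  then show ?thesis
  proof cases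
    case 1
    with strict[OF \<open>u \<in> I\<close> \<open>v \<in> I\<close>] obtain \<xi> where "u < \<xi>" "\<xi> < v"
      "divdiff F F' u v - (p + q * ((u + v) / 2 - c)) = F' \<xi> - (p + q * (\<xi> - c))"
      by blast
    with 1 show ?thesis by (intro exI[of _ \<xi>]) auto
  next
    case 2
    then show ?thesis by (auto simp: divdiff_def)
  next
    case 3
    with strict[OF \<open>v \<in> I\<close> \<open>u \<in> I\<close>] obtain \<xi> where "v < \<xi>" "\<xi> < u"
      "divdiff F F' v u - (p + q * ((v + u) / 2 - c)) = F' \<xi> - (p + q * (\<xi> - c))"
      by blast
    with 3 show ?thesis
      by (intro exI[of _ \<xi>]) (auto simp: divdiff_commute[of F F' u v] add.commute)
  qed
qed

text \<open>A function g on an interval whose derivative g' is monotone, i.e. a convex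
  differentiable function; in the application g = f' and g' = f''.\<close>
locale monotone_derivative =
  fixes I :: "real set" and g g' :: "real \<Rightarrow> real"
  assumes interval: "is_interval I"
    and deriv: "\<And>x. x \<in> I \<Longrightarrow> (g has_real_derivative g' x) (at x within I)"
    and deriv_mono: "\<And>x y. x \<in> I \<Longrightarrow> y \<in> I \<Longrightarrow> x \<le> y \<Longrightarrow> g' x \<le> g' y"
begin

lemma secant_slope_between_derivs:
  assumes "u \<in> I" "v \<in> I" "u < v"
  shows "g' u \<le> divdiff g g' u v" and "divdiff g g' u v \<le> g' v"
proof -
  obtain z where z: "u < z" "z < v" "g v - g u = (v - u) * g' z"
    using mvt_on_interval[OF interval assms deriv] by blast
  have "z \<in> I"
    using interval_between[OF interval assms(1,2)] z by auto
  have "divdiff g g' u v = g' z"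
    using z \<open>u < v\<close> by (simp add: divdiff_def field_simps)
  then show "g' u \<le> divdiff g g' u v" and "divdiff g g' u v \<le> g' v"
    using deriv_mono[OF \<open>u \<in> I\<close> \<open>z \<in> I\<close>] deriv_mono[OF \<open>z \<in> I\<close> \<open>v \<in> I\<close>] z by auto
qed

lemma three_slopes:
  assumes "u \<in> I" "w \<in> I" "u \<le> v" "v \<le> w"
  shows "divdiff g g' u v \<le> divdiff g g' u w \<and> divdiff g g' u w \<le> divdiff g g' v w"
proof -
  have "v \<in> I"
    using interval_between[OF interval assms] .
  consider "u = v" | "v = w" | "u < v" "v < w"
    using assms by linarith
  then show ?thesis
  proof cases
    case 1
    then show ?thesis
      using secant_slope_between_derivs(1)[OF \<open>u \<in> I\<close> \<open>w \<in> I\<close>] \<open>v \<le> w\<close>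
      by (cases "u = w") (auto simp: divdiff_def)
  next
    case 2
    then show ?thesis
      using secant_slope_between_derivs(2)[OF \<open>u \<in> I\<close> \<open>w \<in> I\<close>] \<open>u \<le> v\<close>
      by (cases "u = w") (auto simp: divdiff_def)
  next
    case 3
    define s1 s2 s where "s1 = divdiff g g' u v" and "s2 = divdiff g g' v w"
      and "s = divdiff g g' u w"
    have "s1 \<le> s2"
      using secant_slope_between_derivs(2)[OF \<open>u \<in> I\<close> \<open>v \<in> I\<close> \<open>u < v\<close>]
        secant_slope_between_derivs(1)[OF \<open>v \<in> I\<close> \<open>w \<in> I\<close> \<open>v < w\<close>]
      unfolding s1_def s2_def by linarith
    have "(w - u) * s = (v - u) * s1 + (w - v) * s2"
      using divdiff_mult[of w u g g'] divdiff_mult[of v u g g'] divdiff_mult[of w v g g']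
        divdiff_commute[of g g' u] divdiff_commute[of g g' v w]
      unfolding s_def s1_def s2_def by (simp add: algebra_simps)
    then have "(w - u) * (s - s1) = (w - v) * (s2 - s1)" and "(w - u) * (s2 - s) = (v - u) * (s2 - s1)"
      by (simp_all add: algebra_simps)
    moreover have "0 \<le> (w - v) * (s2 - s1)" "0 \<le> (v - u) * (s2 - s1)"
      using 3 \<open>s1 \<le> s2\<close> by simp_all
    ultimately have "0 \<le> (w - u) * (s - s1)" "0 \<le> (w - u) * (s2 - s)"
      by simp_all
    then have "0 \<le> s - s1" "0 \<le> s2 - s"
      using 3 by (simp_all add: zero_le_mult_iff)
    then show ?thesis
      unfolding s_def s1_def s2_def by simp
  qed
qed

lemma divdiff_mono:
  assumes "a \<in> I" "x \<in> I" "y \<in> I" "x \<le> y"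
  shows "divdiff g g' a x \<le> divdiff g g' a y"
proof -
  consider "a \<le> x" | "x \<le> a" "a \<le> y" | "y \<le> a"
    by linarith
  then show ?thesis
  proof cases
    case 1
    then show ?thesis using three_slopes[OF \<open>a \<in> I\<close> \<open>y \<in> I\<close> 1 \<open>x \<le> y\<close>] by simp
  next
    case 2
    then show ?thesis
      using three_slopes[OF \<open>x \<in> I\<close> \<open>y \<in> I\<close> 2] divdiff_commute[of g g' a x] by linarith
  next
    case 3
    then show ?thesis
      using three_slopes[OF \<open>x \<in> I\<close> \<open>a \<in> I\<close> \<open>x \<le> y\<close> 3] divdiff_commute[of g g' a] by simp
  qed
qed

definition secant_line :: "real \<Rightarrow> real \<Rightarrow> real \<Rightarrow> real" where
  "secant_line a b x = g a + divdiff g g' a b * (x - a)"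

lemma secant_line_diff: "secant_line a b x - secant_line a b y = divdiff g g' a b * (x - y)"
  unfolding secant_line_def by (simp add: algebra_simps)

text \<open>The deviation of g from its secant line is a product whose sign is controlled
  by the monotonicity of divided differences.\<close>
lemma deviation_from_secant_line:
  "g x - secant_line a b x = (x - a) * (divdiff g g' a x - divdiff g g' a b)"
  using divdiff_mult[of x a g g'] divdiff_commute[of g g' a x]
  unfolding secant_line_def by (simp add: algebra_simps)

lemma secant_line_below_outside:
  assumes "a \<in> I" "b \<in> I" "x \<in> I" "x \<le> min a b \<or> max a b \<le> x"
  shows "secant_line a b x \<le> g x"
proof -
  have "0 \<le> (x - a) * (divdiff g g' a x - divdiff g g' a b)"
  proof (cases "x \<le> min a b")
    case True
    then have "divdiff g g' a x \<le> divdiff g g' a b"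
      using divdiff_mono[OF \<open>a \<in> I\<close> \<open>x \<in> I\<close> \<open>b \<in> I\<close>] by simp
    with True show ?thesis by (simp add: mult_nonpos_nonpos)
  next
    case False
    then have "max a b \<le> x" using assms(4) by blast
    then have "divdiff g g' a b \<le> divdiff g g' a x"
      using divdiff_mono[OF \<open>a \<in> I\<close> \<open>b \<in> I\<close> \<open>x \<in> I\<close>] by simp
    with \<open>max a b \<le> x\<close> show ?thesis by simp
  qed
  then show ?thesis using deviation_from_secant_line[of x a b] by linarith
qed

lemma secant_line_above_inside:
  assumes "a \<in> I" "b \<in> I" "min a b \<le> x" "x \<le> max a b"
  shows "g x \<le> secant_line a b x"
proof -
  have "x \<in> I"
    using interval_between[OF interval _ _ assms(3,4)] assms(1,2) by (auto simp: min_def max_def)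
  have "(x - a) * (divdiff g g' a x - divdiff g g' a b) \<le> 0"
  proof (cases "a \<le> b")
    case True
    then have "a \<le> x" "x \<le> b" using assms(3,4) by auto
    then have "divdiff g g' a x \<le> divdiff g g' a b"
      using divdiff_mono[OF \<open>a \<in> I\<close> \<open>x \<in> I\<close> \<open>b \<in> I\<close>] by simp
    with \<open>a \<le> x\<close> show ?thesis by (simp add: mult_nonneg_nonpos)
  next
    case False
    then have "b \<le> x" "x \<le> a" using assms(3,4) by auto
    then have "divdiff g g' a b \<le> divdiff g g' a x"
      using divdiff_mono[OF \<open>a \<in> I\<close> \<open>b \<in> I\<close> \<open>x \<in> I\<close>] by simp
    with \<open>x \<le> a\<close> show ?thesis by (simp add: mult_nonpos_nonneg)
  qed
  then show ?thesis using deviation_from_secant_line[of x a b] by linarith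
qed

end

text \<open>A function f whose derivative f1 has a monotone derivative f2 (i.e. f''' >= 0).\<close>
locale convex_derivative = monotone_derivative I f1 f2 for I and f1 f2 :: "real \<Rightarrow> real" +
  fixes f :: "real \<Rightarrow> real"
  assumes deriv_f: "\<And>x. x \<in> I \<Longrightarrow> (f has_real_derivative f1 x) (at x within I)"
begin

text \<open>Since f' lies below its secant line between a and b, the slope of f on [a,b]
  is at most the value of the secant line at the midpoint.\<close>
lemma divdiff_le_secant_midpoint:
  assumes "a \<in> I" "b \<in> I"
  shows "divdiff f f1 a b \<le> secant_line a b ((a + b) / 2)"
proof -
  obtain \<xi> where \<xi>: "min a b \<le> \<xi>" "\<xi> \<le> max a b"
    and eq: "divdiff f f1 a b - secant_line a b ((a + b) / 2) = f1 \<xi> - secant_line a b \<xi>"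
    using affine_mean_value[OF interval deriv_f assms, of "f1 a" "divdiff f1 f2 a b" a]
    unfolding secant_line_def by blast
  show ?thesis
    using secant_line_above_inside[OF assms \<xi>] eq by linarith
qed

text \<open>On an interval [a',b'] outside (a,b), f' lies above the secant line through
  a and b, which reverses the comparison.\<close>
lemma secant_midpoint_le_divdiff:
  assumes "a \<in> I" "b \<in> I" "a' \<in> I" "b' \<in> I"
    and separated: "max a' b' \<le> min a b \<or> max a b \<le> min a' b'"
  shows "secant_line a b ((a' + b') / 2) \<le> divdiff f f1 a' b'"
proof -
  obtain \<xi> where \<xi>: "min a' b' \<le> \<xi>" "\<xi> \<le> max a' b'"
    and eq: "divdiff f f1 a' b' - secant_line a b ((a' + b') / 2) = f1 \<xi> - secant_line a b \<xi>"
    using affine_mean_value[OF interval deriv_f assms(3,4), of "f1 a" "divdiff f1 f2 a b" a]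
    unfolding secant_line_def by blast
  have "\<xi> \<in> I"
    using interval_between[OF interval _ _ \<xi>] assms(3,4) by (auto simp: min_def max_def)
  moreover have "\<xi> \<le> min a b \<or> max a b \<le> \<xi>"
    using separated \<xi> by linarith
  ultimately show ?thesis
    using secant_line_below_outside[OF assms(1,2)] eq by fastforce
qed

lemma divdiff_step:
  assumes "a \<in> I" "b \<in> I" "a' \<in> I" "b' \<in> I"
    and below: "max a' b' \<le> min a b \<or> (a' = a \<and> b' = b)"
  shows "\<exists>\<psi>. divdiff f1 f2 a' b' \<le> \<psi> \<and> \<psi> \<le> divdiff f1 f2 a b \<and>
           divdiff f f1 a b - divdiff f f1 a' b' = \<psi> * ((a + b) / 2 - (a' + b') / 2)"
proof (cases "(a + b) / 2 = (a' + b') / 2")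
  case True
  with below have "a' = a \<and> b' = b"
    by (auto simp: min_def max_def split: if_splits)
  then show ?thesis by auto
next
  case False
  define c c' where "c = (a + b) / 2" and "c' = (a' + b') / 2"
  have separated: "max a' b' \<le> min a b"
    using below False by auto
  then have "c' < c"
    using False unfolding c_def c'_def by (auto simp: min_def max_def split: if_splits)
  have upper: "divdiff f f1 a b - divdiff f f1 a' b' \<le> divdiff f1 f2 a b * (c - c')"
    using divdiff_le_secant_midpoint[OF assms(1,2)] secant_line_diff[of a b c c']
      secant_midpoint_le_divdiff[OF assms(1-4)] separated
    unfolding c_def c'_def by linarith
  have lower: "divdiff f1 f2 a' b' * (c - c') \<le> divdiff f f1 a b - divdiff f f1 a' b'"
    using divdiff_le_secant_midpoint[OF assms(3,4)] secant_line_diff[of a' b' c c']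
      secant_midpoint_le_divdiff[OF assms(3,4,1,2)] separated
    unfolding c_def c'_def by linarith
  define \<psi> where "\<psi> = (divdiff f f1 a b - divdiff f f1 a' b') / (c - c')"
  have "divdiff f1 f2 a' b' \<le> \<psi>" "\<psi> \<le> divdiff f1 f2 a b"
    using upper lower \<open>c' < c\<close> unfolding \<psi>_def by (simp_all add: field_simps)
  moreover have "divdiff f f1 a b - divdiff f f1 a' b' = \<psi> * (c - c')"
    using \<open>c' < c\<close> unfolding \<psi>_def by simp
  ultimately show ?thesis
    unfolding c_def c'_def by blast
qed

end

lemma summation_by_parts_bound:
  fixes d c \<Phi> \<sigma> :: "nat \<Rightarrow> real"
  assumes step: "\<And>i. 1 \<le> i \<Longrightarrow> i < n \<Longrightarrow>
      \<exists>\<psi>. \<sigma> (Suc i) \<le> \<psi> \<and> \<psi> \<le> \<sigma> i \<and> \<Phi> i - \<Phi> (Suc i) = \<psi> * (c i - c (Suc i))"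
    and moment_nonneg: "\<And>j. 1 \<le> j \<Longrightarrow> j \<le> n \<Longrightarrow> 0 \<le> (\<Sum>i=1..j. d i * (c i - c j))"
    and "1 \<le> m" "m \<le> n"
  shows "(\<Sum>i=1..m. d i) * \<Phi> m + (\<Sum>i=1..m. d i * (c i - c m)) * \<sigma> m \<le> (\<Sum>i=1..m. d i * \<Phi> i)"
  using \<open>1 \<le> m\<close> \<open>m \<le> n\<close>
proof (induction m rule: nat_induct_at_least)
  case base
  then show ?case by simp
next
  case (Suc m)
  define P R where "P = (\<Sum>i=1..m. d i)" and "R = (\<Sum>i=1..m. d i * (c i - c m))"
  obtain \<psi> where \<psi>: "\<sigma> (Suc m) \<le> \<psi>" "\<psi> \<le> \<sigma> m" "\<Phi> m - \<Phi> (Suc m) = \<psi> * (c m - c (Suc m))"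
    using step[OF Suc.hyps] Suc.prems by auto
  have P_Suc: "(\<Sum>i=1..Suc m. d i) = P + d (Suc m)"
    unfolding P_def by simp
  have R_Suc: "(\<Sum>i=1..Suc m. d i * (c i - c (Suc m))) = R + P * (c m - c (Suc m))"
  proof -
    have "(\<Sum>i=1..m. d i * (c i - c (Suc m))) = (\<Sum>i=1..m. d i * (c i - c m) + d i * (c m - c (Suc m)))"
      by (rule sum.cong) (auto simp: algebra_simps)
    then show ?thesis
      unfolding R_def P_def by (simp add: sum.distrib sum_distrib_right)
  qed
  have "0 \<le> R" "0 \<le> R + P * (c m - c (Suc m))"
    using moment_nonneg[of m] moment_nonneg[of "Suc m"] Suc.hyps Suc.prems R_Suc
    unfolding R_def by auto
  then have "R * \<psi> \<le> R * \<sigma> m"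
    and "(R + P * (c m - c (Suc m))) * \<sigma> (Suc m) \<le> (R + P * (c m - c (Suc m))) * \<psi>"
    using \<psi> by (simp_all add: mult_left_mono)
  moreover have "(P + d (Suc m)) * \<Phi> (Suc m) + (R + P * (c m - c (Suc m))) * \<psi>
      = P * \<Phi> m + R * \<psi> + d (Suc m) * \<Phi> (Suc m)"
  proof -
    have "P * (\<Phi> m - \<Phi> (Suc m)) = P * (\<psi> * (c m - c (Suc m)))"
      using \<psi>(3) by simp
    then show ?thesis by algebra
  qed
  ultimately have "(P + d (Suc m)) * \<Phi> (Suc m) + (R + P * (c m - c (Suc m))) * \<sigma> (Suc m)
      \<le> P * \<Phi> m + R * \<sigma> m + d (Suc m) * \<Phi> (Suc m)"
    by linarith
  also have "\<dots> \<le> (\<Sum>i=1..Suc m. d i * \<Phi> i)"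
    using Suc.IH Suc.prems unfolding P_def R_def by simp
  finally show ?case
    unfolding P_Suc R_Suc .
qed

lemma separated_or_equal:
  fixes a b a' b' :: real
  assumes "a' \<le> a" "b' \<le> b"
    and "max a' b' \<le> min a b \<or> {a, b} = {a', b'}"
  shows "max a' b' \<le> min a b \<or> (a' = a \<and> b' = b)"
  using assms by (auto simp: doubleton_eq_iff)

text \<open>The hypothesis on the pairs translates into nonnegativity of the moments
  sum ((x i - y i) * (c i - c j)) with the midpoints c.\<close>
lemma moment_difference:
  fixes x y :: "nat \<Rightarrow> real"
  shows "(\<Sum>i\<in>A. (x i - p) * (x i - q)) - (\<Sum>i\<in>A. (y i - p) * (y i - q))
     = 2 * (\<Sum>i\<in>A. (x i - y i) * ((x i + y i) / 2 - (p + q) / 2))"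
  unfolding sum_subtractf[symmetric] sum_distrib_left
  by (rule sum.cong) (auto simp: field_simps)

lemma total_moment_zero:
  fixes x y :: "nat \<Rightarrow> real"
  assumes "(\<Sum>i\<in>A. x i) = (\<Sum>i\<in>A. y i)" and "(\<Sum>i\<in>A. (x i)\<^sup>2) = (\<Sum>i\<in>A. (y i)\<^sup>2)"
  shows "(\<Sum>i\<in>A. (x i - y i) * ((x i + y i) / 2 - r)) = 0"
proof -
  have "(\<Sum>i\<in>A. (x i - y i) * ((x i + y i) / 2 - r))
      = (\<Sum>i\<in>A. ((x i)\<^sup>2 - (y i)\<^sup>2) / 2 - (x i - y i) * r)"
    by (rule sum.cong) (auto simp: field_simps power2_eq_square)
  also have "\<dots> = ((\<Sum>i\<in>A. (x i)\<^sup>2) - (\<Sum>i\<in>A. (y i)\<^sup>2)) / 2 - ((\<Sum>i\<in>A. x i) - (\<Sum>i\<in>A. y i)) * r"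
    by (simp only: sum_subtractf sum_divide_distrib[symmetric] sum_distrib_right[symmetric])
  finally show ?thesis
    using assms by simp
qed

text \<open>The main theorem: with d i = a i - b i, the slopes of f and f' on the pairs, and the
  midpoints c i, the summation-by-parts bound at m = n has vanishing right-hand side.\<close>
theorem mainTheorem12:
  fixes a b :: "nat \<Rightarrow> real" and n :: nat
    and I :: "real set" and f f1 f2 f3 :: "real \<Rightarrow> real"
  assumes a_mono: "\<And>i. 1 \<le> i \<Longrightarrow> i < n \<Longrightarrow> a (i + 1) \<le> a i"
    and b_mono: "\<And>i. 1 \<le> i \<Longrightarrow> i < n \<Longrightarrow> b (i + 1) \<le> b i"
    and sep: "\<And>i. 1 \<le> i \<Longrightarrow> i < n \<Longrightarrow>
              min (a i) (b i) \<ge> max (a (i + 1)) (b (i + 1)) \<or> {a i, b i} = {a (i + 1), b (i + 1)}"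
    and sum1: "(\<Sum>i=1..n. a i) = (\<Sum>i=1..n. b i)"
    and sum2: "(\<Sum>i=1..n. (a i)\<^sup>2) = (\<Sum>i=1..n. (b i)\<^sup>2)"
    and ineq: "\<And>j. 1 \<le> j \<Longrightarrow> j \<le> n \<Longrightarrow>
              (\<Sum>i=1..j. (a i - a j) * (a i - b j)) \<ge> (\<Sum>i=1..j. (b i - a j) * (b i - b j))"
    and I_interval: "is_interval I"
    and a_in: "\<And>i. 1 \<le> i \<Longrightarrow> i \<le> n \<Longrightarrow> a i \<in> I"
    and b_in: "\<And>i. 1 \<le> i \<Longrightarrow> i \<le> n \<Longrightarrow> b i \<in> I"
    and d1: "\<And>x. x \<in> I \<Longrightarrow> (f has_real_derivative f1 x) (at x within I)"
    and d2: "\<And>x. x \<in> I \<Longrightarrow> (f1 has_real_derivative f2 x) (at x within I)"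
    and d3: "\<And>x. x \<in> I \<Longrightarrow> (f2 has_real_derivative f3 x) (at x within I)"
    and f3_nonneg: "\<And>x. x \<in> I \<Longrightarrow> f3 x \<ge> 0"
  shows "(\<Sum>i=1..n. f (a i)) \<ge> (\<Sum>i=1..n. f (b i))"
proof (cases "n = 0")
  case False
  interpret convex_derivative I f1 f2 f
    using I_interval d1 d2 mono_if_deriv_nonneg[OF I_interval d3 f3_nonneg]
    by unfold_locales auto
  define c where "c i = (a i + b i) / 2" for i
  have step: "\<exists>\<psi>. divdiff f1 f2 (a (Suc i)) (b (Suc i)) \<le> \<psi> \<and> \<psi> \<le> divdiff f1 f2 (a i) (b i) \<and>
      divdiff f f1 (a i) (b i) - divdiff f f1 (a (Suc i)) (b (Suc i)) = \<psi> * (c i - c (Suc i))"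
    if "1 \<le> i" "i < n" for i
    using divdiff_step[OF a_in b_in a_in b_in separated_or_equal[OF a_mono b_mono sep]] that
    unfolding c_def by auto
  have moment_nonneg: "0 \<le> (\<Sum>i=1..j. (a i - b i) * (c i - c j))" if "1 \<le> j" "j \<le> n" for j
    using ineq[OF that] moment_difference[of a "a j" "b j" "{1..j}" b] unfolding c_def by linarith
  have P_zero: "(\<Sum>i=1..n. a i - b i) = 0"
    using sum1 by (simp add: sum_subtractf)
  have R_zero: "(\<Sum>i=1..n. (a i - b i) * (c i - c n)) = 0"
    using total_moment_zero[OF sum1 sum2, of "c n"] unfolding c_def .
  from P_zero R_zero have "0 \<le> (\<Sum>i=1..n. (a i - b i) * divdiff f f1 (a i) (b i))"
    using summation_by_parts_bound[OF step moment_nonneg, where m = n] False by simp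
  then show ?thesis
    by (simp add: divdiff_mult sum_subtractf)
qed simp

end
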